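(* Under the curve flow $\gamma_t=\gamma''-\tfrac23k_1\gamma$, the curvatures evolve by \[ \begin{pmatrix}k_1\\ k_2\end{pmatrix}_t=\begin{pmatrix}k_1''+2k_2'\\ \tfrac23(k_1k_1'-k_1''')-k_2''\end{pmatrix}=\mathcal{P}\,\mathsf E k_2=\mathcal{Q}\,\mathsf E\rho_3, \qquad \rho_3=\tfrac13(k_1')^2+k_2k_1'+k_2^2+\tfrac19k_1^3, \] so this system is bi-Hamiltonian and the integrals $\int k_2\,\mathrm{d}x$ and $\int\rho_3\,\mathrm{d}x$ are conserved (for appropriate boundary conditions).
   Context: $\gamma(x,t)$ is a family of nondegenerate curves in centroaffine $\mathbb R^3$ parametrized by centroaffine arclength $x$ ($\det(\gamma,\gamma',\gamma'')=1$), with $\gamma'''=(k_1\gamma)'+k_2\gamma$ defining the invariants $k_1,k_2$. $D=\partial/\partial x$. The Hamiltonian operators are \[ \mathcal{P}=\begin{pmatrix}-2D^3+Dk_1+k_1D & -D^4+D^2k_1+2Dk_2+k_2D\\ D^4-k_1D^2+2k_2D+Dk_2 & \tfrac23(D^5+k_1Dk_1-k_1D^3-D^3k_1)+[k_2,D^2]\end{pmatrix},\qquad \mathcal{Q}=\begin{pmatrix}0&D\\ D&0\end{pmatrix}, \] and $\mathsf E$ is the vector Euler operator $\mathsf E f=\big(\sum_{j\ge0}(-D)^j\partial f/\partial k_1^{(j)},\ \sum_{j\ge0}(-D)^j\partial f/\partial k_2^{(j)}\big)^{\mathrm T}$. *)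

theory Defs
  imports "HOL-Analysis.Analysis"
begin

definition Dv :: "(real \<Rightarrow> 'a::real_normed_vector) \<Rightarrow> real \<Rightarrow> 'a" where
  "Dv f = (\<lambda>x. vector_derivative f (at x))"

definition Dn :: "nat \<Rightarrow> (real \<Rightarrow> 'a::real_normed_vector) \<Rightarrow> real \<Rightarrow> 'a" where
  "Dn n f = (Dv ^^ n) f"

text \<open>Partial derivatives of a family f x t (x = arclength parameter, t = time).\<close>
definition px :: "(real \<Rightarrow> real \<Rightarrow> 'a::real_normed_vector) \<Rightarrow> real \<Rightarrow> real \<Rightarrow> 'a" where
  "px f = (\<lambda>x t. vector_derivative (\<lambda>y. f y t) (at x))"

definition pt :: "(real \<Rightarrow> real \<Rightarrow> 'a::real_normed_vector) \<Rightarrow> real \<Rightarrow> real \<Rightarrow> 'a" where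
  "pt f = (\<lambda>x t. vector_derivative (\<lambda>s. f x s) (at t))"

fun mixed :: "bool list \<Rightarrow> (real \<Rightarrow> real \<Rightarrow> 'a::real_normed_vector) \<Rightarrow> real \<Rightarrow> real \<Rightarrow> 'a" where
  "mixed [] f = f"
| "mixed (b # bs) f = (if b then px else pt) (mixed bs f)"

definition smooth2 :: "(real \<Rightarrow> real \<Rightarrow> 'a::real_normed_vector) \<Rightarrow> bool" where
  "smooth2 f \<longleftrightarrow> (\<forall>bs. continuous_on UNIV (\<lambda>(x,t). mixed bs f x t)
      \<and> (\<forall>x t. (\<lambda>y. mixed bs f y t) differentiable (at x)
              \<and> (\<lambda>s. mixed bs f x s) differentiable (at t)))"

text \<open>A differential function of (k1,k2) is a function of the jet variables:
  u j stands for k1^(j), v j for k2^(j).\<close>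
type_synonym jet = "nat \<Rightarrow> real"

definition jet :: "(real \<Rightarrow> real) \<Rightarrow> real \<Rightarrow> jet" where
  "jet f x = (\<lambda>j. Dn j f x)"

definition pk1 :: "(jet \<Rightarrow> jet \<Rightarrow> real) \<Rightarrow> nat \<Rightarrow> jet \<Rightarrow> jet \<Rightarrow> real" where
  "pk1 F j u v = deriv (\<lambda>s. F (u(j := s)) v) (u j)"

definition pk2 :: "(jet \<Rightarrow> jet \<Rightarrow> real) \<Rightarrow> nat \<Rightarrow> jet \<Rightarrow> jet \<Rightarrow> real" where
  "pk2 F j u v = deriv (\<lambda>s. F u (v(j := s))) (v j)"

text \<open>Components of the Euler operator E F = (sum_j (-D)^j dF/dk1^(j), sum_j (-D)^j dF/dk2^(j)),
  evaluated along the functions k1 = a, k2 = b.\<close>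
definition E1 :: "(jet \<Rightarrow> jet \<Rightarrow> real) \<Rightarrow> (real \<Rightarrow> real) \<Rightarrow> (real \<Rightarrow> real) \<Rightarrow> real \<Rightarrow> real" where
  "E1 F a b x = (\<Sum>j. (-1) ^ j * Dn j (\<lambda>y. pk1 F j (jet a y) (jet b y)) x)"

definition E2 :: "(jet \<Rightarrow> jet \<Rightarrow> real) \<Rightarrow> (real \<Rightarrow> real) \<Rightarrow> (real \<Rightarrow> real) \<Rightarrow> real \<Rightarrow> real" where
  "E2 F a b x = (\<Sum>j. (-1) ^ j * Dn j (\<lambda>y. pk2 F j (jet a y) (jet b y)) x)"

definition dens_k2 :: "jet \<Rightarrow> jet \<Rightarrow> real" where
  "dens_k2 u v = v 0"

definition rho3 :: "jet \<Rightarrow> jet \<Rightarrow> real" where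
  "rho3 u v = (1/3) * (u 1)^2 + v 0 * u 1 + (v 0)^2 + (1/9) * (u 0)^3"

definition P1 :: "(real \<Rightarrow> real) \<Rightarrow> (real \<Rightarrow> real) \<Rightarrow> (real \<Rightarrow> real) \<Rightarrow> (real \<Rightarrow> real) \<Rightarrow> real \<Rightarrow> real" where
  "P1 k1 k2 f g x =
     - 2 * Dn 3 f x + Dv (\<lambda>y. k1 y * f y) x + k1 x * Dv f x
     + (- Dn 4 g x + Dn 2 (\<lambda>y. k1 y * g y) x + 2 * Dv (\<lambda>y. k2 y * g y) x + k2 x * Dv g x)"

definition P2 :: "(real \<Rightarrow> real) \<Rightarrow> (real \<Rightarrow> real) \<Rightarrow> (real \<Rightarrow> real) \<Rightarrow> (real \<Rightarrow> real) \<Rightarrow> real \<Rightarrow> real" where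
  "P2 k1 k2 f g x =
     Dn 4 f x - k1 x * Dn 2 f x + 2 * k2 x * Dv f x + Dv (\<lambda>y. k2 y * f y) x
     + ((2/3) * (Dn 5 g x + k1 x * Dv (\<lambda>y. k1 y * g y) x - k1 x * Dn 3 g x
                 - Dn 3 (\<lambda>y. k1 y * g y) x)
        + (k2 x * Dn 2 g x - Dn 2 (\<lambda>y. k2 y * g y) x))"

definition Q1 :: "(real \<Rightarrow> real) \<Rightarrow> (real \<Rightarrow> real) \<Rightarrow> real \<Rightarrow> real" where
  "Q1 f g x = Dv g x"

definition Q2 :: "(real \<Rightarrow> real) \<Rightarrow> (real \<Rightarrow> real) \<Rightarrow> real \<Rightarrow> real" where
  "Q2 f g x = Dv f x"

end

theory Submission
  imports Defs
begin

text \<open>The structure equation expresses \<gamma>''' in the frame (\<gamma>, \<gamma>', \<gamma>''), which is a basis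
  because its determinant is 1. Differentiating the flow three times in x and comparing with
  the time derivative of \<gamma>''' (mixed partials commute) leaves a vanishing combination of
  \<gamma> and \<gamma>'; its two coefficients are the evolution equations of k1 and k2. The densities
  k2 and rho3 are polynomials in finitely many jet variables, so their Euler derivatives are
  explicit, and applying P and Q to them is calculus in x. Finally, both densities satisfy
  conservation laws d\<rho>/dt = dJ/dx with fluxes J built from k1, k2 and their x-derivatives, so
  their integrals over a period are constant in time.\<close>

section \<open>Partial derivatives of smooth families\<close>

lemma mixed_px: "mixed bs (px f) = mixed (bs @ [True]) f"
  by (induction bs) auto

lemma mixed_pt: "mixed bs (pt f) = mixed (bs @ [False]) f"
  by (induction bs) auto

lemma smooth2_px: "smooth2 f \<Longrightarrow> smooth2 (px f)"
  unfolding smooth2_def mixed_px by blast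

lemma smooth2_pt: "smooth2 f \<Longrightarrow> smooth2 (pt f)"
  unfolding smooth2_def mixed_pt by blast

lemma smooth2_funpow_px: "smooth2 f \<Longrightarrow> smooth2 ((px ^^ n) f)"
  by (induction n) (auto intro: smooth2_px)

lemma smooth2_continuous_on: "smooth2 f \<Longrightarrow> continuous_on UNIV (\<lambda>(x, t). f x t)"
  unfolding smooth2_def by (metis mixed.simps(1))

lemma smooth2_has_vector_derivative_x:
  "smooth2 f \<Longrightarrow> ((\<lambda>y. f y t) has_vector_derivative px f x t) (at x)"
  unfolding smooth2_def px_def by (metis mixed.simps(1) vector_derivative_works)

lemma smooth2_has_vector_derivative_t:
  "smooth2 f \<Longrightarrow> ((\<lambda>s. f x s) has_vector_derivative pt f x t) (at t)"
  unfolding smooth2_def pt_def by (metis mixed.simps(1) vector_derivative_works)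

lemma smooth2_has_real_derivative_x:
  "smooth2 (f :: real \<Rightarrow> real \<Rightarrow> real) \<Longrightarrow> ((\<lambda>y. f y t) has_real_derivative px f x t) (at x)"
  using smooth2_has_vector_derivative_x has_real_derivative_iff_has_vector_derivative by blast

lemma smooth2_has_real_derivative_t:
  "smooth2 (f :: real \<Rightarrow> real \<Rightarrow> real) \<Longrightarrow> ((\<lambda>s. f x s) has_real_derivative pt f x t) (at t)"
  using smooth2_has_vector_derivative_t has_real_derivative_iff_has_vector_derivative by blast

lemma px_eqI:
  "(\<And>x t. ((\<lambda>y. f y t) has_vector_derivative g x t) (at x)) \<Longrightarrow> px f = g"
  unfolding px_def by (intro ext) (rule vector_derivative_at)

lemma pt_eqI:
  "(\<And>x t. ((\<lambda>s. f x s) has_vector_derivative g x t) (at t)) \<Longrightarrow> pt f = g"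
  unfolding pt_def by (intro ext) (rule vector_derivative_at)

lemma continuous_on_slice:
  assumes "continuous_on UNIV (\<lambda>(x, t). f x t)"
  shows "continuous_on S (\<lambda>x. f x t)"
proof -
  have "continuous_on S (\<lambda>x. (\<lambda>(x, t). f x t) (x, t))"
    by (rule continuous_on_compose2[OF assms]) (auto intro!: continuous_intros)
  then show ?thesis by simp
qed

lemma continuous_on_swap:
  assumes "continuous_on UNIV (\<lambda>(x, t). f x t)"
  shows "continuous_on S (\<lambda>p. f (snd p) (fst p))"
proof -
  have "continuous_on S (\<lambda>p. (\<lambda>(x, t). f x t) (snd p, fst p))"
    by (rule continuous_on_compose2[OF assms]) (auto intro!: continuous_intros)
  then show ?thesis by simp
qed

lemma has_vector_derivative_integral_param:
  fixes f f' :: "real \<Rightarrow> real \<Rightarrow> 'a::euclidean_space"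
  assumes "\<And>x s. ((\<lambda>s. f x s) has_vector_derivative f' x s) (at s)"
    and "continuous_on UNIV (\<lambda>(x, s). f' x s)"
    and "\<And>s. continuous_on {a..b} (\<lambda>x. f x s)"
  shows "((\<lambda>s. integral {a..b} (\<lambda>x. f x s)) has_vector_derivative
           integral {a..b} (\<lambda>x. f' x t)) (at t)"
proof -
  have "((\<lambda>s. integral (cbox a b) (\<lambda>x. f x s)) has_vector_derivative
           integral (cbox a b) (\<lambda>x. f' x t)) (at t within UNIV)"
  proof (rule leibniz_rule_vector_derivative[where fx="\<lambda>s x. f' x s"])
    show "continuous_on (UNIV \<times> cbox a b) (\<lambda>(s, x). f' x s)"
      using continuous_on_swap[OF assms(2)] by (simp add: split_beta)
    show "(\<lambda>x. f x s) integrable_on cbox a b" for s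
      using assms(3) by (simp add: integrable_continuous_interval)
  qed (use assms(1) in \<open>auto intro: has_vector_derivative_at_within\<close>)
  then show ?thesis by (simp add: cbox_interval)
qed

lemma smooth2_pt_eq_integral:
  fixes f :: "real \<Rightarrow> real \<Rightarrow> 'a::euclidean_space"
  assumes f: "smooth2 f" and "a \<le> y"
  shows "pt f y s = pt f a s + integral {a..y} (\<lambda>z. pt (px f) z s)"
proof -
  have "((\<lambda>z. px f z s) has_integral (f y s - f a s)) {a..y}" for s
    by (rule fundamental_theorem_of_calculus[OF \<open>a \<le> y\<close>])
      (auto intro: has_vector_derivative_at_within smooth2_has_vector_derivative_x[OF f])
  then have "(\<lambda>s. f y s) = (\<lambda>s. f a s + integral {a..y} (\<lambda>z. px f z s))"
    by (intro ext) (metis integral_unique add.commute diff_add_cancel)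
  moreover have "((\<lambda>s. f a s + integral {a..y} (\<lambda>z. px f z s)) has_vector_derivative
      pt f a s + integral {a..y} (\<lambda>z. pt (px f) z s)) (at s)"
  proof (intro has_vector_derivative_add smooth2_has_vector_derivative_t[OF f]
      has_vector_derivative_integral_param)
    show "((\<lambda>s. px f z s) has_vector_derivative pt (px f) z s') (at s')" for z s'
      using smooth2_has_vector_derivative_t[OF smooth2_px[OF f]] .
    show "continuous_on UNIV (\<lambda>(z, s). pt (px f) z s)"
      using smooth2_continuous_on[OF smooth2_pt[OF smooth2_px[OF f]]] .
    show "continuous_on {a..y} (\<lambda>z. px f z s')" for s'
      using continuous_on_slice[OF smooth2_continuous_on[OF smooth2_px[OF f]]] .
  qed
  ultimately show ?thesis
    unfolding pt_def[of f] by (simp add: vector_derivative_at)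
qed

text \<open>Clairaut: integrating \<open>pt (px f)\<close> in x from a fixed base point recovers \<open>pt f\<close>, whose
  x-derivative is then \<open>pt (px f)\<close> by the fundamental theorem of calculus.\<close>
lemma px_pt_commute:
  fixes f :: "real \<Rightarrow> real \<Rightarrow> 'a::euclidean_space"
  assumes f: "smooth2 f"
  shows "px (pt f) x t = pt (px f) x t"
proof -
  define a where "a = x - 1"
  define h where "h = (\<lambda>z. pt (px f) z t)"
  have "continuous_on {a..x + 1} h"
    unfolding h_def by (rule continuous_on_slice[OF smooth2_continuous_on])
      (intro smooth2_pt smooth2_px f)
  then have "((\<lambda>u. integral {a..u} h) has_vector_derivative h x) (at x within {a..x + 1})"
    by (rule integral_has_vector_derivative) (auto simp: a_def)
  moreover have "at x within {a..x + 1} = at x"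
    by (rule at_within_interior) (auto simp: a_def)
  ultimately have "((\<lambda>u. pt f a t + integral {a..u} h) has_vector_derivative h x) (at x)"
    using has_vector_derivative_add[OF has_vector_derivative_const] by fastforce
  then have "((\<lambda>u. pt f u t) has_vector_derivative h x) (at x)"
  proof (rule has_vector_derivative_transform_within_open[where S="{a<..}"])
    show "pt f a t + integral {a..y} h = pt f y t" if "y \<in> {a<..}" for y
      using smooth2_pt_eq_integral[OF f, of a y t] that unfolding h_def by simp
  qed (auto simp: a_def)
  then show ?thesis
    unfolding px_def[of "pt f"] h_def by (simp add: vector_derivative_at)
qed

lemma pt_funpow_px:
  fixes f :: "real \<Rightarrow> real \<Rightarrow> 'a::euclidean_space"
  assumes "smooth2 f"
  shows "pt ((px ^^ n) f) = (px ^^ n) (pt f)"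
proof (induction n)
  case (Suc n)
  have "pt ((px ^^ Suc n) f) = px (pt ((px ^^ n) f))"
    using px_pt_commute[OF smooth2_funpow_px[OF assms]] by (intro ext) simp
  then show ?case using Suc by simp
qed simp

lemma Dv_slice: "Dv (\<lambda>y. f y t) = (\<lambda>y. px f y t)"
  unfolding Dv_def px_def by simp

lemma Dn_slice: "Dn n (\<lambda>y. f y t) = (\<lambda>y. (px ^^ n) f y t)"
proof (induction n arbitrary: f)
  case (Suc n)
  have "Dn (Suc n) (\<lambda>y. f y t) = Dn n (\<lambda>y. px f y t)"
    unfolding Dn_def by (simp add: funpow_Suc_right Dv_slice del: funpow.simps)
  then show ?case
    using Suc[of "px f"] by (simp add: funpow_Suc_right del: funpow.simps)
qed (simp add: Dn_def)

lemma Dn_0 [simp]: "Dn 0 f = f"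
  by (simp add: Dn_def)

lemma Dn_Suc_0: "Dn (Suc 0) f = Dv f"
  by (simp add: Dn_def)

lemma DERIV_imp_Dv: "(g has_real_derivative D) (at x) \<Longrightarrow> Dv g x = D"
  unfolding Dv_def by (simp add: has_real_derivative_iff_has_vector_derivative vector_derivative_at)

lemma Dv_const [simp]: "Dv (\<lambda>_. c) = (\<lambda>_. 0)"
  unfolding Dv_def by (simp add: vector_derivative_const_at)

lemma Dn_zero [simp]: "Dn n (\<lambda>_. 0) = (\<lambda>_. 0)"
  by (induction n) (auto simp: Dn_def)

lemma Dn_const: "n > 0 \<Longrightarrow> Dn n (\<lambda>_. c) = (\<lambda>_. 0)"
  by (cases n) (auto simp: Dn_def funpow_Suc_right Dn_zero[unfolded Dn_def] simp del: funpow.simps)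

lemma Dv_periodic:
  fixes g :: "real \<Rightarrow> real"
  assumes per: "\<And>x. g (x + L) = g x" and diff: "\<And>x. g differentiable (at x)"
  shows "Dv g (x + L) = Dv g x"
proof -
  have "(g has_real_derivative Dv g (x + L)) (at (x + L))"
    unfolding Dv_def using diff vector_derivative_works has_real_derivative_iff_has_vector_derivative
    by blast
  then have "((\<lambda>y. g (y + L)) has_real_derivative Dv g (x + L)) (at x)"
    by (simp add: DERIV_shift)
  then show ?thesis using per by (simp add: DERIV_imp_Dv)
qed

lemma funpow_px_periodic:
  assumes f: "smooth2 (f :: real \<Rightarrow> real \<Rightarrow> real)" and per: "\<And>x t. f (x + L) t = f x t"
  shows "(px ^^ n) f (x + L) t = (px ^^ n) f x t"
proof (induction n arbitrary: x)
  case (Suc n)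
  have "(\<lambda>y. (px ^^ n) f y t) differentiable (at x)" for x
    using smooth2_has_vector_derivative_x[OF smooth2_funpow_px[OF f]]
    by (auto simp: differentiable_def has_vector_derivative_def)
  then have "Dv (\<lambda>y. (px ^^ n) f y t) (x + L) = Dv (\<lambda>y. (px ^^ n) f y t) x"
    using Suc by (intro Dv_periodic)
  then show ?case by (simp add: Dv_slice)
qed (use per in simp)

section \<open>Conservation laws\<close>

lemma conservation_law:
  fixes \<rho> J h :: "real \<Rightarrow> real \<Rightarrow> real"
  assumes "\<And>x s. ((\<lambda>s. \<rho> x s) has_real_derivative h x s) (at s)"
    and "continuous_on UNIV (\<lambda>(x, s). h x s)"
    and "\<And>s. continuous_on {a..b} (\<lambda>x. \<rho> x s)"
    and flux: "\<And>y. ((\<lambda>x. J x t) has_real_derivative h y t) (at y)"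
    and periodic: "J b t = J a t" and "a \<le> b"
  shows "((\<lambda>s. integral {a..b} (\<lambda>x. \<rho> x s)) has_real_derivative 0) (at t)"
proof -
  have "((\<lambda>x. h x t) has_integral (J b t - J a t)) {a..b}"
    by (rule fundamental_theorem_of_calculus[OF \<open>a \<le> b\<close>])
      (use flux in \<open>auto simp: has_real_derivative_iff_has_vector_derivative[symmetric]
        intro: has_field_derivative_at_within\<close>)
  then have "integral {a..b} (\<lambda>x. h x t) = 0"
    using periodic by (simp add: integral_unique)
  moreover have "((\<lambda>s. integral {a..b} (\<lambda>x. \<rho> x s)) has_vector_derivative
      integral {a..b} (\<lambda>x. h x t)) (at t)"
    using assms(1-3)
    by (intro has_vector_derivative_integral_param)
      (auto simp: has_real_derivative_iff_has_vector_derivative[symmetric])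
  ultimately show ?thesis
    by (simp add: has_real_derivative_iff_has_vector_derivative)
qed

lemma pk_dens_k2:
  "pk1 dens_k2 j u v = 0" "pk2 dens_k2 0 u v = 1" "j > 0 \<Longrightarrow> pk2 dens_k2 j u v = 0"
  unfolding pk1_def pk2_def dens_k2_def by auto

lemma E_dens_k2: "E1 dens_k2 a b = (\<lambda>_. 0)" "E2 dens_k2 a b = (\<lambda>_. 1)"
proof -
  show "E1 dens_k2 a b = (\<lambda>_. 0)"
    unfolding E1_def pk_dens_k2 by simp
  have "E2 dens_k2 a b x = (\<Sum>j\<in>{0}. (-1) ^ j * Dn j (\<lambda>y. pk2 dens_k2 j (jet a y) (jet b y)) x)"
    for x unfolding E2_def by (rule suminf_finite) (auto simp: pk_dens_k2)
  then show "E2 dens_k2 a b = (\<lambda>_. 1)"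
    by (auto simp: pk_dens_k2)
qed

lemma pk_rho3:
  "pk1 rho3 0 u v = (1/3) * (u 0)^2"
  "pk1 rho3 1 u v = (2/3) * u 1 + v 0"
  "j \<ge> 2 \<Longrightarrow> pk1 rho3 j u v = 0"
  "pk2 rho3 0 u v = u 1 + 2 * v 0"
  "j \<ge> 1 \<Longrightarrow> pk2 rho3 j u v = 0"
proof -
  have "((\<lambda>s. rho3 (u(0 := s)) v) has_real_derivative (1/3) * (u 0)^2) (at (u 0))"
    unfolding rho3_def by (auto intro!: derivative_eq_intros simp: power2_eq_square)
  then show "pk1 rho3 0 u v = (1/3) * (u 0)^2"
    unfolding pk1_def by (rule DERIV_imp_deriv)
  have "((\<lambda>s. rho3 (u(1 := s)) v) has_real_derivative (2/3) * u 1 + v 0) (at (u 1))"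
    unfolding rho3_def by (auto intro!: derivative_eq_intros simp: power2_eq_square)
  then show "pk1 rho3 1 u v = (2/3) * u 1 + v 0"
    unfolding pk1_def by (rule DERIV_imp_deriv)
  show "j \<ge> 2 \<Longrightarrow> pk1 rho3 j u v = 0"
    unfolding pk1_def rho3_def by simp
  have "((\<lambda>s. rho3 u (v(0 := s))) has_real_derivative u 1 + 2 * v 0) (at (v 0))"
    unfolding rho3_def by (auto intro!: derivative_eq_intros simp: power2_eq_square)
  then show "pk2 rho3 0 u v = u 1 + 2 * v 0"
    unfolding pk2_def by (rule DERIV_imp_deriv)
  show "j \<ge> 1 \<Longrightarrow> pk2 rho3 j u v = 0"
    unfolding pk2_def rho3_def by simp
qed

lemma E_rho3:
  "E1 rho3 a b = (\<lambda>x. (1/3) * (a x)^2 - Dv (\<lambda>y. (2/3) * Dv a y + b y) x)"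
  "E2 rho3 a b = (\<lambda>x. Dv a x + 2 * b x)"
proof -
  have "E1 rho3 a b x = (\<Sum>j\<in>{0,1}. (-1) ^ j * Dn j (\<lambda>y. pk1 rho3 j (jet a y) (jet b y)) x)"
    for x unfolding E1_def by (rule suminf_finite) (auto simp: pk_rho3)
  then show "E1 rho3 a b = (\<lambda>x. (1/3) * (a x)^2 - Dv (\<lambda>y. (2/3) * Dv a y + b y) x)"
    using pk_rho3(2) by (auto simp: pk_rho3 jet_def Dn_Suc_0)
  have "E2 rho3 a b x = (\<Sum>j\<in>{0}. (-1) ^ j * Dn j (\<lambda>y. pk2 rho3 j (jet a y) (jet b y)) x)"
    for x unfolding E2_def by (rule suminf_finite) (auto simp: pk_rho3)
  then show "E2 rho3 a b = (\<lambda>x. Dv a x + 2 * b x)"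
    by (auto simp: pk_rho3 jet_def Dn_Suc_0)
qed

lemma vector_matrix_mult_eq_0_imp_eq_0:
  fixes M :: "real^'n^'n"
  assumes "det M \<noteq> 0" and "x v* M = 0"
  shows "x = 0"
proof -
  have "invertible (transpose M)"
    using assms(1) by (simp add: invertible_det_nz)
  then show ?thesis
    using assms(2) by (metis invertible_def matrix_left_invertible_ker transpose_matrix_vector)
qed

lemma frame_combination_eq_0:
  fixes A B C :: "real^3"
  assumes "det (vector [A, B, C] :: real^3^3) = 1"
    and "\<And>i. a * A$i + b * B$i + c * C$i = 0"
  shows "a = 0" "b = 0" "c = 0"
proof -
  have "(vector [a, b, c] v* (vector [A, B, C] :: real^3^3)) $ i = a * A$i + b * B$i + c * C$i"
    for i by (simp add: vector_matrix_mult_def sum_3)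
  then have "vector [a, b, c] v* (vector [A, B, C] :: real^3^3) = 0"
    using assms(2) by (simp add: vec_eq_iff)
  then have "vector [a, b, c] = (0 :: real^3)"
    using assms(1) vector_matrix_mult_eq_0_imp_eq_0[of "vector [A, B, C] :: real^3^3"] by simp
  then show "a = 0" "b = 0" "c = 0"
    by (metis vector_3 zero_index)+
qed

section \<open>The centroaffine curve flow\<close>

locale centroaffine_flow =
  fixes \<gamma> :: "real \<Rightarrow> real \<Rightarrow> real^3" and k1 k2 :: "real \<Rightarrow> real \<Rightarrow> real"
  assumes smooth_gamma: "smooth2 \<gamma>" and smooth_k1: "smooth2 k1" and smooth_k2: "smooth2 k2"
    and arclength: "\<And>x t. det (vector [\<gamma> x t, Dn 1 (\<lambda>y. \<gamma> y t) x, Dn 2 (\<lambda>y. \<gamma> y t) x]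
                            :: real^3^3) = 1"
    and structure_eq: "\<And>x t. Dn 3 (\<lambda>y. \<gamma> y t) x
           = Dv (\<lambda>y. k1 y t *\<^sub>R \<gamma> y t) x + k2 x t *\<^sub>R \<gamma> x t"
    and flow: "\<And>x t. pt \<gamma> x t = Dn 2 (\<lambda>y. \<gamma> y t) x - ((2/3) * k1 x t) *\<^sub>R \<gamma> x t"
begin

lemma smooth_derivatives:
  "smooth2 (px \<gamma>)" "smooth2 (px (px \<gamma>))"
  "smooth2 (px k1)" "smooth2 (px (px k1))" "smooth2 (px (px (px k1)))"
  "smooth2 (px k2)" "smooth2 (px (px k2))" "smooth2 (px (px (px k2)))"
  using smooth_gamma smooth_k1 smooth_k2 by (auto intro!: smooth2_px)

lemma has_derivative_x [derivative_intros]: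
  "((\<lambda>y. \<gamma> y t) has_vector_derivative px \<gamma> x t) (at x within S)"
  "((\<lambda>y. px \<gamma> y t) has_vector_derivative px (px \<gamma>) x t) (at x within S)"
  "((\<lambda>y. px (px \<gamma>) y t) has_vector_derivative px (px (px \<gamma>)) x t) (at x within S)"
  "((\<lambda>y. k1 y t) has_field_derivative px k1 x t) (at x within S)"
  "((\<lambda>y. px k1 y t) has_field_derivative px (px k1) x t) (at x within S)"
  "((\<lambda>y. px (px k1) y t) has_field_derivative px (px (px k1)) x t) (at x within S)"
  "((\<lambda>y. k2 y t) has_field_derivative px k2 x t) (at x within S)"
  "((\<lambda>y. px k2 y t) has_field_derivative px (px k2) x t) (at x within S)"
  "((\<lambda>y. px (px k2) y t) has_field_derivative px (px (px k2)) x t) (at x within S)"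
  using smooth_gamma smooth_k1 smooth_k2 smooth_derivatives
  by (auto intro!: has_vector_derivative_at_within smooth2_has_vector_derivative_x
      has_field_derivative_at_within smooth2_has_real_derivative_x)

lemma has_derivative_t [derivative_intros]:
  "((\<lambda>s. \<gamma> x s) has_vector_derivative pt \<gamma> x t) (at t within S)"
  "((\<lambda>s. px \<gamma> x s) has_vector_derivative pt (px \<gamma>) x t) (at t within S)"
  "((\<lambda>s. k1 x s) has_field_derivative pt k1 x t) (at t within S)"
  "((\<lambda>s. px k1 x s) has_field_derivative pt (px k1) x t) (at t within S)"
  "((\<lambda>s. k2 x s) has_field_derivative pt k2 x t) (at t within S)"
  using smooth_gamma smooth_k1 smooth_k2 smooth_derivatives
  by (auto intro!: has_vector_derivative_at_within smooth2_has_vector_derivative_t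
      has_field_derivative_at_within smooth2_has_real_derivative_t)

lemma structure_eq_px:
  "px (px (px \<gamma>)) = (\<lambda>x t. (px k1 x t + k2 x t) *\<^sub>R \<gamma> x t + k1 x t *\<^sub>R px \<gamma> x t)"
proof (intro ext)
  fix x t
  have "Dv (\<lambda>y. k1 y t *\<^sub>R \<gamma> y t) x = k1 x t *\<^sub>R px \<gamma> x t + px k1 x t *\<^sub>R \<gamma> x t"
    unfolding Dv_def by (rule vector_derivative_at) (auto intro!: derivative_eq_intros)
  then show "px (px (px \<gamma>)) x t = (px k1 x t + k2 x t) *\<^sub>R \<gamma> x t + k1 x t *\<^sub>R px \<gamma> x t"
    using structure_eq[of t x] by (simp add: Dn_slice numeral_3_eq_3 algebra_simps)
qed

lemma flow_px: "pt \<gamma> = (\<lambda>x t. px (px \<gamma>) x t - ((2/3) * k1 x t) *\<^sub>R \<gamma> x t)"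
  using flow by (intro ext) (simp add: Dn_slice numeral_2_eq_2)

lemma px_pt_gamma:
  "px (pt \<gamma>) = (\<lambda>x t. ((1/3) * px k1 x t + k2 x t) *\<^sub>R \<gamma> x t + ((1/3) * k1 x t) *\<^sub>R px \<gamma> x t)"
  unfolding flow_px
  by (rule px_eqI, (rule derivative_eq_intros refl | simp)+)
    (simp add: structure_eq_px vec_eq_iff algebra_simps)

lemma px2_pt_gamma:
  "px (px (pt \<gamma>)) = (\<lambda>x t. ((1/3) * px (px k1) x t + px k2 x t) *\<^sub>R \<gamma> x t
     + ((2/3) * px k1 x t + k2 x t) *\<^sub>R px \<gamma> x t + ((1/3) * k1 x t) *\<^sub>R px (px \<gamma>) x t)"
  unfolding px_pt_gamma
  by (rule px_eqI, (rule derivative_eq_intros refl | simp)+) (simp add: vec_eq_iff algebra_simps)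

lemma px3_pt_gamma:
  "px (px (px (pt \<gamma>))) = (\<lambda>x t.
      ((1/3) * px (px (px k1)) x t + px (px k2) x t + (1/3) * k1 x t * (px k1 x t + k2 x t)) *\<^sub>R \<gamma> x t
    + (px (px k1) x t + 2 * px k2 x t + (1/3) * (k1 x t)^2) *\<^sub>R px \<gamma> x t
    + (px k1 x t + k2 x t) *\<^sub>R px (px \<gamma>) x t)"
  unfolding px2_pt_gamma
  by (rule px_eqI, (rule derivative_eq_intros refl | simp)+)
    (simp add: structure_eq_px vec_eq_iff algebra_simps power2_eq_square)

lemma pt_px3_gamma:
  "pt (px (px (px \<gamma>))) = (\<lambda>x t.
      (pt (px k1) x t + pt k2 x t) *\<^sub>R \<gamma> x t + (px k1 x t + k2 x t) *\<^sub>R pt \<gamma> x t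
    + pt k1 x t *\<^sub>R px \<gamma> x t + k1 x t *\<^sub>R pt (px \<gamma>) x t)"
  unfolding structure_eq_px
  by (rule pt_eqI, (rule derivative_eq_intros refl | simp)+)

text \<open>Both sides of the identity below are the time derivative of \<gamma>''' written in the frame
  (\<gamma>, \<gamma>', \<gamma>''); the \<gamma>''-coefficients agree, those of \<gamma>' and \<gamma> give the evolution equations.\<close>
lemma frame_coefficients:
  "pt k1 x t = px (px k1) x t + 2 * px k2 x t"
  "pt (px k1) x t + pt k2 x t
     = (1/3) * px (px (px k1)) x t + px (px k2) x t + (2/3) * k1 x t * px k1 x t"
proof -
  define A B C where "A = \<gamma> x t" and "B = px \<gamma> x t" and "C = px (px \<gamma>) x t"
  define a where "a = pt (px k1) x t + pt k2 x t - (2/3) * k1 x t * (px k1 x t + k2 x t)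
     + k1 x t * ((1/3) * px k1 x t + k2 x t)
     - ((1/3) * px (px (px k1)) x t + px (px k2) x t + (1/3) * k1 x t * (px k1 x t + k2 x t))"
  define b where "b = pt k1 x t - (px (px k1) x t + 2 * px k2 x t)"
  have commute: "pt (px (px (px \<gamma>))) x t = px (px (px (pt \<gamma>))) x t"
    using pt_funpow_px[OF smooth_gamma, of 3] by (simp add: numeral_3_eq_3)
  have "a * A$i + b * B$i + 0 * C$i = 0" for i
  proof -
    have "(pt (px (px (px \<gamma>))) x t) $ i = (px (px (px (pt \<gamma>))) x t) $ i"
      using commute by simp
    then have "(pt (px k1) x t + pt k2 x t) * A$i
        + (px k1 x t + k2 x t) * (C$i - ((2/3) * k1 x t) * A$i)
        + pt k1 x t * B$i + k1 x t * (((1/3) * px k1 x t + k2 x t) * A$i + ((1/3) * k1 x t) * B$i)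
      = ((1/3) * px (px (px k1)) x t + px (px k2) x t + (1/3) * k1 x t * (px k1 x t + k2 x t)) * A$i
        + (px (px k1) x t + 2 * px k2 x t + (1/3) * (k1 x t)^2) * B$i + (px k1 x t + k2 x t) * C$i"
      unfolding pt_px3_gamma px3_pt_gamma
      unfolding px_pt_commute[OF smooth_gamma, symmetric] px_pt_gamma
      by (simp add: flow_px A_def B_def C_def)
    then show ?thesis
      unfolding a_def b_def by (simp add: algebra_simps power2_eq_square)
  qed
  moreover have "det (vector [A, B, C] :: real^3^3) = 1"
    using arclength[of x t] by (simp add: A_def B_def C_def Dn_slice numeral_2_eq_2)
  ultimately have "a = 0" "b = 0"
    by (blast intro: frame_combination_eq_0)+
  then show "pt k1 x t = px (px k1) x t + 2 * px k2 x t"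
    "pt (px k1) x t + pt k2 x t
     = (1/3) * px (px (px k1)) x t + px (px k2) x t + (2/3) * k1 x t * px k1 x t"
    unfolding a_def b_def by (simp_all add: field_simps)
qed

lemma evolution_k1: "pt k1 = (\<lambda>x t. px (px k1) x t + 2 * px k2 x t)"
  using frame_coefficients(1) by (intro ext)

lemma pt_px_k1: "pt (px k1) x t = px (px (px k1)) x t + 2 * px (px k2) x t"
proof -
  have "px (pt k1) = (\<lambda>x t. px (px (px k1)) x t + 2 * px (px k2) x t)"
    unfolding evolution_k1 by (rule px_eqI)
      (auto intro!: derivative_eq_intros simp: has_real_derivative_iff_has_vector_derivative[symmetric])
  then show ?thesis using px_pt_commute[OF smooth_k1] by metis
qed

lemma evolution_k2:
  "pt k2 x t = (2/3) * (k1 x t * px k1 x t - px (px (px k1)) x t) - px (px k2) x t"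
  using frame_coefficients(2)[of x t] unfolding pt_px_k1 by (simp add: algebra_simps)

lemma evolution_bihamiltonian:
  "let a = (\<lambda>y. k1 y t); b = (\<lambda>y. k2 y t);
          r1 = Dn 2 a x + 2 * Dv b x;
          r2 = (2/3) * (a x * Dv a x - Dn 3 a x) - Dn 2 b x
      in pt k1 x t = r1 \<and> pt k2 x t = r2
       \<and> P1 a b (E1 dens_k2 a b) (E2 dens_k2 a b) x = r1
       \<and> P2 a b (E1 dens_k2 a b) (E2 dens_k2 a b) x = r2
       \<and> Q1 (E1 rho3 a b) (E2 rho3 a b) x = r1
       \<and> Q2 (E1 rho3 a b) (E2 rho3 a b) x = r2"
proof -
  have Dn_const_real: "Dn 2 (\<lambda>_. c) = (\<lambda>_. 0)" "Dn 3 (\<lambda>_. c) = (\<lambda>_. 0)"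
     "Dn 4 (\<lambda>_. c) = (\<lambda>_. 0)" "Dn 5 (\<lambda>_. c) = (\<lambda>_. 0)" for c :: real
    by (auto intro!: Dn_const)
  have px_power: "(px ^^ 2) f = px (px f)" "(px ^^ 3) f = px (px (px f))" for f :: "real \<Rightarrow> real \<Rightarrow> real"
    by (simp_all add: numeral_2_eq_2 numeral_3_eq_3)
  have Q1_rho3: "Dv (\<lambda>y. px k1 y t + 2 * k2 y t) x = px (px k1) x t + 2 * px k2 x t"
    by (rule DERIV_imp_Dv) (auto intro!: derivative_eq_intros)
  have E1_rho3_inner: "Dv (\<lambda>y. 2/3 * px k1 y t + k2 y t) = (\<lambda>z. 2/3 * px (px k1) z t + px k2 z t)"
    by (rule ext, rule DERIV_imp_Dv) (auto intro!: derivative_eq_intros)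
  have Q2_rho3: "Dv (\<lambda>z. 1/3 * (k1 z t)\<^sup>2 - (2/3 * px (px k1) z t + px k2 z t)) x
      = 2/3 * k1 x t * px k1 x t - (2/3 * px (px (px k1)) x t + px (px k2) x t)"
    by (rule DERIV_imp_Dv) (auto intro!: derivative_eq_intros)
  show ?thesis
    unfolding Let_def E_dens_k2 E_rho3 P1_def P2_def Q1_def Q2_def
    apply (simp only: mult_zero_right mult_1_right Dn_zero Dn_const_real Dv_const)
    apply (simp only: Dn_slice Dv_slice px_power E1_rho3_inner Q1_rho3 Q2_rho3)
    apply (simp add: evolution_k1 evolution_k2)
    done
qed

lemma continuous_on_components:
  "continuous_on UNIV (\<lambda>p. k1 (fst p) (snd p))" "continuous_on UNIV (\<lambda>p. k2 (fst p) (snd p))"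
  "continuous_on UNIV (\<lambda>p. px k1 (fst p) (snd p))"
  "continuous_on UNIV (\<lambda>p. pt k1 (fst p) (snd p))" "continuous_on UNIV (\<lambda>p. pt k2 (fst p) (snd p))"
  "continuous_on UNIV (\<lambda>p. pt (px k1) (fst p) (snd p))"
  using smooth_k1 smooth_k2 smooth_derivatives
  by (auto simp: split_beta[symmetric] intro!: smooth2_continuous_on smooth2_pt)

lemma continuous_on_slices:
  "continuous_on S (\<lambda>x. k1 x t)" "continuous_on S (\<lambda>x. k2 x t)" "continuous_on S (\<lambda>x. px k1 x t)"
  using smooth_k1 smooth_k2 smooth_derivatives
  by (auto intro!: continuous_on_slice smooth2_continuous_on)

lemma k_periodic:
  assumes "\<And>x t. k1 (x + L) t = k1 x t" "\<And>x t. k2 (x + L) t = k2 x t"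
  shows "k1 L t = k1 0 t" "px k1 L t = px k1 0 t" "px (px k1) L t = px (px k1) 0 t"
    "k2 L t = k2 0 t" "px k2 L t = px k2 0 t"
  using funpow_px_periodic[OF smooth_k1 assms(1), of 0 0 t]
    funpow_px_periodic[OF smooth_k1 assms(1), of 1 0 t]
    funpow_px_periodic[OF smooth_k1 assms(1), of 2 0 t]
    funpow_px_periodic[OF smooth_k2 assms(2), of 0 0 t]
    funpow_px_periodic[OF smooth_k2 assms(2), of 1 0 t]
  by (simp_all add: numeral_2_eq_2)

lemma conserved_k2:
  assumes "\<And>x t. k1 (x + L) t = k1 x t" "\<And>x t. k2 (x + L) t = k2 x t" and "L > 0"
  shows "((\<lambda>s. integral {0..L} (\<lambda>x. k2 x s)) has_real_derivative 0) (at t)"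
proof (rule conservation_law)
  let ?J = "\<lambda>y t. 1/3 * (k1 y t)^2 - 2/3 * px (px k1) y t - px k2 y t"
  show "((\<lambda>x. ?J x t) has_real_derivative pt k2 y t) (at y)" for y
    unfolding evolution_k2 by (rule derivative_eq_intros refl | simp)+
  show "?J L t = ?J 0 t"
    using k_periodic[OF assms(1,2)] by simp
  show "continuous_on UNIV (\<lambda>(x, s). pt k2 x s)"
    by (rule smooth2_continuous_on[OF smooth2_pt[OF smooth_k2]])
  show "((\<lambda>s. k2 x s) has_real_derivative pt k2 x s) (at s)" for x s
    by (rule has_derivative_t)
qed (use assms(3) in \<open>auto intro: continuous_on_slices\<close>)

lemma conserved_rho3:
  assumes "\<And>x t. k1 (x + L) t = k1 x t" "\<And>x t. k2 (x + L) t = k2 x t" and "L > 0"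
  shows "((\<lambda>s. integral {0..L} (\<lambda>x. rho3 (jet (\<lambda>y. k1 y s) x) (jet (\<lambda>y. k2 y s) x)))
              has_real_derivative 0) (at t)"
proof -
  have rho3_jet: "rho3 (jet (\<lambda>y. k1 y s) x) (jet (\<lambda>y. k2 y s) x) =
      1/3 * (px k1 x s)^2 + k2 x s * px k1 x s + (k2 x s)^2 + 1/9 * (k1 x s)^3" for x s
    by (simp add: rho3_def jet_def Dn_Suc_0 Dv_slice)
  define h where "h = (\<lambda>x s. 2/3 * px k1 x s * pt (px k1) x s + pt k2 x s * px k1 x s
      + k2 x s * pt (px k1) x s + 2 * k2 x s * pt k2 x s + 1/3 * (k1 x s)^2 * pt k1 x s)"
  let ?J = "\<lambda>y t. 1/3 * (px k1 y t * px k2 y t - k2 y t * px (px k1) y t)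
        + 1/3 * (k1 y t)^2 * px k1 y t + 2/3 * (k1 y t)^2 * k2 y t"
  have "((\<lambda>s. integral {0..L} (\<lambda>x. 1/3 * (px k1 x s)^2 + k2 x s * px k1 x s + (k2 x s)^2
      + 1/9 * (k1 x s)^3)) has_real_derivative 0) (at t)"
  proof (rule conservation_law[where h=h])
    show "((\<lambda>s. 1/3 * (px k1 x s)^2 + k2 x s * px k1 x s + (k2 x s)^2 + 1/9 * (k1 x s)^3)
        has_real_derivative h x s) (at s)" for x s
      unfolding h_def by (rule derivative_eq_intros refl | simp)+
        (simp add: algebra_simps power2_eq_square)
    have "continuous_on UNIV (\<lambda>p. h (fst p) (snd p))"
      unfolding h_def by (intro continuous_intros continuous_on_components)
    then show "continuous_on UNIV (\<lambda>(x, s). h x s)"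
      by (simp add: split_beta)
    show "((\<lambda>x. ?J x t) has_real_derivative h y t) (at y)" for y
      unfolding h_def evolution_k1 evolution_k2 pt_px_k1
      by (rule derivative_eq_intros refl | simp)+ (simp add: field_simps power2_eq_square)
    show "?J L t = ?J 0 t"
      using k_periodic[OF assms(1,2)] by simp
  qed (use assms(3) in \<open>auto intro!: continuous_intros continuous_on_slices\<close>)
  then show ?thesis by (simp add: rho3_jet)
qed

end

theorem mainTheorem2:
  fixes \<gamma> :: "real \<Rightarrow> real \<Rightarrow> real^3" and k1 k2 :: "real \<Rightarrow> real \<Rightarrow> real"
  assumes smooth_gamma: "smooth2 \<gamma>" and smooth_k1: "smooth2 k1" and smooth_k2: "smooth2 k2"
    and arclength: "\<And>x t. det (vector [\<gamma> x t, Dn 1 (\<lambda>y. \<gamma> y t) x, Dn 2 (\<lambda>y. \<gamma> y t) x]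
                            :: real^3^3) = 1"
    and structure_eq: "\<And>x t. Dn 3 (\<lambda>y. \<gamma> y t) x
           = Dv (\<lambda>y. k1 y t *\<^sub>R \<gamma> y t) x + k2 x t *\<^sub>R \<gamma> x t"
    and flow: "\<And>x t. pt \<gamma> x t = Dn 2 (\<lambda>y. \<gamma> y t) x - ((2/3) * k1 x t) *\<^sub>R \<gamma> x t"
  shows "(\<forall>x t.
      let a = (\<lambda>y. k1 y t); b = (\<lambda>y. k2 y t);
          r1 = Dn 2 a x + 2 * Dv b x;
          r2 = (2/3) * (a x * Dv a x - Dn 3 a x) - Dn 2 b x
      in pt k1 x t = r1 \<and> pt k2 x t = r2
       \<and> P1 a b (E1 dens_k2 a b) (E2 dens_k2 a b) x = r1
       \<and> P2 a b (E1 dens_k2 a b) (E2 dens_k2 a b) x = r2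
       \<and> Q1 (E1 rho3 a b) (E2 rho3 a b) x = r1
       \<and> Q2 (E1 rho3 a b) (E2 rho3 a b) x = r2)
    \<and> (\<forall>L > 0. (\<forall>x t. k1 (x + L) t = k1 x t \<and> k2 (x + L) t = k2 x t) \<longrightarrow>
      (\<forall>t. ((\<lambda>s. integral {0..L} (\<lambda>x. k2 x s)) has_real_derivative 0) (at t)
         \<and> ((\<lambda>s. integral {0..L} (\<lambda>x. rho3 (jet (\<lambda>y. k1 y s) x) (jet (\<lambda>y. k2 y s) x)))
              has_real_derivative 0) (at t)))"
proof -
  interpret centroaffine_flow \<gamma> k1 k2
    by unfold_locales (fact assms)+
  show ?thesis
    using evolution_bihamiltonian conserved_k2 conserved_rho3 by blast
qed

end
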